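(* Let $R$ be a Bézout domain and let $A,B,C\in R^{n\times n}$ satisfy $ABA=ACA$. If $R_r(A)=R_r(AB)$ and $R_r(B)=R_r(BA)$, then $AB$ is similar to $CA$.
   Context: A Bézout domain is an integral domain in which every finitely generated ideal is principal. For $M\in R^{m\times n}$, $R_r(M)=\{Mx : x\in R^{n\times 1}\}\subseteq R^{m\times 1}$ is the column space of $M$. Two matrices $M,N\in R^{n\times n}$ are similar if $M=S^{-1}NS$ for some invertible $S\in R^{n\times n}$. *)

theory Defs
  imports "Jordan_Normal_Form.Matrix"
begin

text \<open>The ideal generated by a finite set S is the set of
  R-linear combinations of elements of S; a principal ideal is (d) = dR.\<close>

class bezout_domain = idom +
  assumes fg_ideal_principal:
    "finite (S :: 'a set) \<Longrightarrow>
       \<exists>d. {x. \<exists>c. x = (\<Sum>s\<in>S. c s * s)} = range (\<lambda>r. d * r)"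

definition col_space :: "'a :: semiring_1 mat \<Rightarrow> 'a vec set" where
  "col_space M = {M *\<^sub>v x | x. x \<in> carrier_vec (dim_col M)}"

end

theory Submission
  imports Defs "Jordan_Normal_Form.Determinant"
begin

text \<open>Over a Bezout domain every matrix \<open>M\<close> has a column basis: \<open>M = H * Z\<close> and \<open>H = M * Z'\<close>
  with \<open>H\<close> left cancellable. It is built row by row, splitting off the gcd combination of the
  entries of a row as a new basis column. For such a basis \<open>A = H * F\<close>, \<open>H = A * E\<close>, the column
  space hypotheses give \<open>A = A * B * X\<close> and \<open>B = B * A * Y\<close>, which make \<open>T = F * B * H\<close>
  invertible with inverse \<open>F * Y * X * E\<close>; and \<open>A * B * A = A * C * A\<close> gives \<open>F * C * H = T\<close>
  after cancelling \<open>H\<close>. So \<open>A * B = H * (F * B)\<close> and \<open>C * A = (C * H) * F\<close> are both products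
  \<open>P * Q\<close> with \<open>Q * P = T\<close>. Any such product is similar to the block diagonal matrix with blocks
  \<open>T\<close> and \<open>0\<close>: the idempotent \<open>1 - P * T\<^sup>-\<^sup>1 * Q\<close> factors through a column basis \<open>N\<close> of its
  own, and \<open>[P | N]\<close> is invertible.\<close>

definition append_cols :: "'a :: zero mat \<Rightarrow> 'a mat \<Rightarrow> 'a mat" (infixr \<open>@\<^sub>c\<close> 65) where
  "A @\<^sub>c B = four_block_mat A B (0\<^sub>m 0 (dim_col A)) (0\<^sub>m 0 (dim_col B))"

lemma carrier_append_cols[simp, intro]:
  "A \<in> carrier_mat nr nc1 \<Longrightarrow> B \<in> carrier_mat nr nc2 \<Longrightarrow> A @\<^sub>c B \<in> carrier_mat nr (nc1 + nc2)"
  unfolding append_cols_def carrier_mat_def by auto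

lemma four_block_mat_degenerate:
  assumes "dim_col B = 0" "dim_row C = 0" "dim_row D = 0" "dim_col D = 0"
  shows "four_block_mat A B C D = A"
  using assms by (intro eq_matI) auto

lemma append_cols_mult_append_rows:
  fixes X :: "'a :: semiring_0 mat"
  assumes "X \<in> carrier_mat n a" "Y \<in> carrier_mat n b" "P \<in> carrier_mat a k" "Q \<in> carrier_mat b k"
  shows "(X @\<^sub>c Y) * (P @\<^sub>r Q) = X * P + Y * Q"
proof -
  have "(X @\<^sub>c Y) * (P @\<^sub>r Q) = four_block_mat (X * P + Y * Q) (X * 0\<^sub>m a 0 + Y * 0\<^sub>m b 0)
      (0\<^sub>m 0 a * P + 0\<^sub>m 0 b * Q) (0\<^sub>m 0 a * 0\<^sub>m a 0 + 0\<^sub>m 0 b * 0\<^sub>m b 0)"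
    unfolding append_cols_def append_rows_def using assms
    by (simp only: carrier_matD, intro mult_four_block_mat) auto
  also have "\<dots> = X * P + Y * Q"
    using assms by (intro four_block_mat_degenerate) auto
  finally show ?thesis .
qed

lemma mult_append_cols:
  fixes M :: "'a :: semiring_0 mat"
  assumes M: "M \<in> carrier_mat m n" and "X \<in> carrier_mat n a" "Y \<in> carrier_mat n b"
  shows "M * (X @\<^sub>c Y) = M * X @\<^sub>c M * Y"
proof -
  have "M * (X @\<^sub>c Y) = four_block_mat M (0\<^sub>m m 0) (0\<^sub>m 0 n) (0\<^sub>m 0 0) * (X @\<^sub>c Y)"
    using M by (simp add: four_block_mat_degenerate)
  also have "\<dots> = four_block_mat (M * X + 0\<^sub>m m 0 * 0\<^sub>m 0 a) (M * Y + 0\<^sub>m m 0 * 0\<^sub>m 0 b)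
      (0\<^sub>m 0 n * X + 0\<^sub>m 0 0 * 0\<^sub>m 0 a) (0\<^sub>m 0 n * Y + 0\<^sub>m 0 0 * 0\<^sub>m 0 b)"
    unfolding append_cols_def using assms
    by (simp only: carrier_matD, intro mult_four_block_mat) auto
  also have "\<dots> = M * X @\<^sub>c M * Y"
    unfolding append_cols_def using assms by (intro cong_four_block_mat) auto
  finally show ?thesis .
qed

lemma append_rows_mult_append_cols:
  fixes L :: "'a :: semiring_0 mat"
  assumes "L \<in> carrier_mat a n" "Z \<in> carrier_mat b n" "H \<in> carrier_mat n c" "N \<in> carrier_mat n d"
  shows "(L @\<^sub>r Z) * (H @\<^sub>c N) = four_block_mat (L * H) (L * N) (Z * H) (Z * N)"
proof -
  have "(L @\<^sub>r Z) * (H @\<^sub>c N) = four_block_mat (L * H + 0\<^sub>m a 0 * 0\<^sub>m 0 c) (L * N + 0\<^sub>m a 0 * 0\<^sub>m 0 d)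
      (Z * H + 0\<^sub>m b 0 * 0\<^sub>m 0 c) (Z * N + 0\<^sub>m b 0 * 0\<^sub>m 0 d)"
    unfolding append_rows_def append_cols_def using assms
    by (simp only: carrier_matD, intro mult_four_block_mat) auto
  also have "\<dots> = four_block_mat (L * H) (L * N) (Z * H) (Z * N)"
    using assms by (intro cong_four_block_mat) auto
  finally show ?thesis .
qed

lemma mult_assoc_dim:
  assumes "dim_col (A :: 'a :: semiring_0 mat) = dim_row B" "dim_col B = dim_row C"
  shows "A * B * C = A * (B * C)"
proof (rule assoc_mult_mat)
  show "A \<in> carrier_mat (dim_row A) (dim_col A)" by (rule carrier_matI) auto
  show "B \<in> carrier_mat (dim_col A) (dim_col B)" using assms(1) by (intro carrier_matI) auto
  show "C \<in> carrier_mat (dim_col B) (dim_col C)" using assms(2) by (intro carrier_matI) auto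
qed

definition indep_cols :: "'a :: comm_ring_1 mat \<Rightarrow> bool" where
  "indep_cols H \<longleftrightarrow> (\<forall>k Y. Y \<in> carrier_mat (dim_col H) k \<longrightarrow>
     H * Y = 0\<^sub>m (dim_row H) k \<longrightarrow> Y = 0\<^sub>m (dim_col H) k)"

lemma indep_cols_cancel:
  assumes H: "H \<in> carrier_mat n r" and "indep_cols H"
    and X: "X \<in> carrier_mat r k" and X': "X' \<in> carrier_mat r k" and "H * X = H * X'"
  shows "X = X'"
proof -
  have "H * (X - X') = 0\<^sub>m n k"
    using assms by (simp add: mult_minus_distrib_mat)
  then have "X - X' = 0\<^sub>m r k"
    using assms unfolding indep_cols_def by (metis carrier_matD minus_carrier_mat)
  show ?thesis
  proof (rule eq_matI)
    fix i j assume "i < dim_row X'" "j < dim_col X'"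
    then have "(X - X') $$ (i, j) = 0" using \<open>X - X' = 0\<^sub>m r k\<close> X' by simp
    then show "X $$ (i, j) = X' $$ (i, j)" using \<open>i < dim_row X'\<close> \<open>j < dim_col X'\<close> X X' by simp
  qed (use X X' in auto)
qed

lemma mat_mult_left_right_inverse_comm_ring:
  fixes T :: "'a :: comm_ring_1 mat"
  assumes T: "T \<in> carrier_mat r r" and W: "W \<in> carrier_mat r r" and TW: "T * W = 1\<^sub>m r"
  shows "W * T = 1\<^sub>m r"
proof -
  define T' where "T' = det W \<cdot>\<^sub>m adj_mat T"
  have T': "T' \<in> carrier_mat r r"
    unfolding T'_def using adj_mat[OF T] by simp
  have "det W * det T = 1"
    using det_mult[OF T W] TW by (simp add: mult.commute)
  then have T'T: "T' * T = 1\<^sub>m r"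
    unfolding T'_def using adj_mat[OF T] T
    by (intro eq_matI) (auto simp: mult_smult_assoc_mat mult.assoc[symmetric])
  have "W = T' * T * W" using T'T W by simp
  also have "\<dots> = T'" using T' T W TW by simp
  finally show ?thesis using T'T by simp
qed

lemma det_eq_0_if_zero_row:
  fixes A :: "'a :: comm_ring_1 mat"
  assumes A: "A \<in> carrier_mat n n" and "k < n" and "\<And>j. j < n \<Longrightarrow> A $$ (k, j) = 0"
  shows "det A = 0"
proof -
  have "(\<Prod>i = 0..<n. A $$ (i, p i)) = 0" if "p permutes {0..<n}" for p
    using assms that by (intro prod_zero[OF _ bexI[of _ k]]) (auto simp: permutes_in_image)
  then show ?thesis unfolding det_def'[OF A] by simp
qed

text \<open>Padding a left invertible matrix with more columns than rows by zero rows would give a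
  left invertible square matrix of determinant zero.\<close>

lemma left_invertible_mat_dim_le:
  fixes S :: "'a :: comm_ring_1 mat"
  assumes S: "S \<in> carrier_mat n m" and W: "W \<in> carrier_mat m n" and WS: "W * S = 1\<^sub>m m"
  shows "m \<le> n"
proof (rule ccontr)
  assume "\<not> m \<le> n"
  then have nm: "n < m" by simp
  define S' where "S' = S @\<^sub>r 0\<^sub>m (m - n) m"
  define W' where "W' = W @\<^sub>c 0\<^sub>m m (m - n)"
  have S': "S' \<in> carrier_mat m m" and W': "W' \<in> carrier_mat m m"
    unfolding S'_def W'_def using S W nm
    by (metis carrier_append_rows zero_carrier_mat le_add_diff_inverse less_imp_le_nat,
        metis carrier_append_cols zero_carrier_mat le_add_diff_inverse less_imp_le_nat)
  have "W' * S' = W * S + 0\<^sub>m m (m - n) * 0\<^sub>m (m - n) m"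
    unfolding W'_def S'_def using S W by (intro append_cols_mult_append_rows) auto
  then have "det W' * det S' = 1"
    using det_mult[OF W' S'] WS by simp
  moreover have "det S' = 0"
    using S nm by (intro det_eq_0_if_zero_row[OF S' nm]) (simp add: S'_def append_rows_def)
  ultimately show False by simp
qed

lemma col_space_subset_imp_factor:
  fixes X :: "'a :: comm_ring_1 mat"
  assumes X: "X \<in> carrier_mat n m" and Y: "Y \<in> carrier_mat n k"
    and sub: "col_space X \<subseteq> col_space Y"
  shows "\<exists>Z. Z \<in> carrier_mat k m \<and> X = Y * Z"
proof -
  have "\<exists>z. z \<in> carrier_vec k \<and> Y *\<^sub>v z = col X j" if "j < m" for j
  proof -
    have "col X j = X *\<^sub>v unit_vec m j" using X that by (intro eq_vecI) auto
    then have "col X j \<in> col_space X"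
      using X that unfolding col_space_def by auto
    then have "col X j \<in> col_space Y" using sub by auto
    then show ?thesis unfolding col_space_def using Y by auto
  qed
  then obtain z where z: "\<And>j. j < m \<Longrightarrow> z j \<in> carrier_vec k \<and> Y *\<^sub>v z j = col X j"
    by metis
  define Z where "Z = mat k m (\<lambda>(i, j). z j $ i)"
  have "col Z j = z j" if "j < m" for j
    using z[OF that] that unfolding Z_def by (intro eq_vecI) auto
  then have "X = Y * Z"
    using z X Y by (intro eq_matI) (auto simp: Z_def simp flip: index_mult_mat_vec)
  then show ?thesis by (intro exI[of _ Z]) (simp add: Z_def)
qed

lemma bezout_domain_gcd_pair:
  fixes a b :: "'a :: bezout_domain"
  shows "\<exists>x y. (x * a + y * b) dvd a \<and> (x * a + y * b) dvd b"
proof -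
  obtain d where d: "{x. \<exists>c. x = (\<Sum>s\<in>{a, b}. c s * s)} = range (\<lambda>r. d * r)"
    using fg_ideal_principal[of "{a, b}"] by auto
  have "d \<in> range (\<lambda>r. d * r)" by (rule range_eqI[of _ _ 1]) simp
  then obtain c where c: "d = (\<Sum>s\<in>{a, b}. c s * s)" unfolding d[symmetric] by blast
  have "v \<in> range (\<lambda>r. d * r)" if "v \<in> {a, b}" for v
    unfolding d[symmetric] using that
    by (intro CollectI exI[of _ "\<lambda>s. if s = v then 1 else 0"]) (auto simp: sum.insert_if)
  then have dvd: "d dvd a" "d dvd b" by (blast elim: rangeE intro: dvd_triv_left)+
  show ?thesis
  proof (cases "a = b")
    case True
    then show ?thesis using c dvd by (intro exI[of _ "c a"] exI[of _ 0]) simp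
  next
    case False
    then show ?thesis using c dvd by (intro exI[of _ "c a"] exI[of _ "c b"]) simp
  qed
qed

lemma bezout_domain_gcd_sum:
  fixes f :: "nat \<Rightarrow> 'a :: bezout_domain"
  shows "\<exists>c. \<forall>j<m. (\<Sum>i<m. c i * f i) dvd f j"
proof (induction m)
  case 0
  show ?case by simp
next
  case (Suc m)
  then obtain c where c: "\<forall>j<m. (\<Sum>i<m. c i * f i) dvd f j" by blast
  define d where "d = (\<Sum>i<m. c i * f i)"
  obtain x y where xy: "(x * d + y * f m) dvd d" "(x * d + y * f m) dvd f m"
    using bezout_domain_gcd_pair[of d "f m"] by blast
  define c' where "c' i = (if i < m then x * c i else y)" for i
  have "(\<Sum>i<Suc m. c' i * f i) = x * d + y * f m"
    by (simp add: c'_def d_def sum_distrib_left mult.assoc)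
  then have "\<forall>j<Suc m. (\<Sum>i<Suc m. c' i * f i) dvd f j"
    using c xy dvd_trans unfolding d_def less_Suc_eq by metis
  then show ?case by blast
qed

definition has_col_basis :: "'a :: comm_ring_1 mat \<Rightarrow> bool" where
  "has_col_basis M \<longleftrightarrow> (\<exists>r H Z1 Z2. H \<in> carrier_mat (dim_row M) r \<and> Z1 \<in> carrier_mat r (dim_col M)
     \<and> Z2 \<in> carrier_mat (dim_col M) r \<and> M = H * Z1 \<and> H = M * Z2 \<and> indep_cols H)"

lemma has_col_basis_zero: "has_col_basis (0\<^sub>m n m :: 'a :: comm_ring_1 mat)"
proof -
  have "indep_cols (0\<^sub>m n 0 :: 'a mat)"
    unfolding indep_cols_def by (auto intro: eq_matI)
  moreover have "0\<^sub>m n m = 0\<^sub>m n 0 * (0\<^sub>m 0 m :: 'a mat)"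
    by (intro eq_matI) (auto simp: scalar_prod_def)
  ultimately show ?thesis
    unfolding has_col_basis_def
    by (intro exI[of _ 0] exI[of _ "0\<^sub>m n 0"] exI[of _ "0\<^sub>m 0 m"] exI[of _ "0\<^sub>m m 0"]) auto
qed

lemma indep_cols_append_col:
  fixes V :: "'a :: idom mat"
  assumes V: "V \<in> carrier_mat n 1" and H: "H \<in> carrier_mat n r" and "indep_cols H"
    and i: "i < n" and "V $$ (i, 0) \<noteq> 0" and H_i: "\<And>l. l < r \<Longrightarrow> H $$ (i, l) = 0"
  shows "indep_cols (V @\<^sub>c H)"
  unfolding indep_cols_def
proof (intro allI impI)
  fix k Y
  assume "Y \<in> carrier_mat (dim_col (V @\<^sub>c H)) k" "(V @\<^sub>c H) * Y = 0\<^sub>m (dim_row (V @\<^sub>c H)) k"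
  moreover have VH: "V @\<^sub>c H \<in> carrier_mat n (1 + r)" using carrier_append_cols[OF V H] .
  ultimately have Y: "Y \<in> carrier_mat (1 + r) k" and VHY: "(V @\<^sub>c H) * Y = 0\<^sub>m n k" by auto
  define Y1 where "Y1 = mat 1 k (\<lambda>(_, j). Y $$ (0, j))"
  define Y2 where "Y2 = mat r k (\<lambda>(l, j). Y $$ (Suc l, j))"
  have Y1: "Y1 \<in> carrier_mat 1 k" and Y2: "Y2 \<in> carrier_mat r k" unfolding Y1_def Y2_def by auto
  have Y_split: "Y = Y1 @\<^sub>r Y2"
    using Y by (intro eq_matI) (auto simp: Y1_def Y2_def append_rows_def)
  have sum: "V * Y1 + H * Y2 = 0\<^sub>m n k"
    using VHY append_cols_mult_append_rows[OF V H Y1 Y2] Y_split by simp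
  have "Y1 = 0\<^sub>m 1 k"
  proof (rule eq_matI)
    fix a j assume "a < dim_row (0\<^sub>m 1 k :: 'a mat)" "j < dim_col (0\<^sub>m 1 k :: 'a mat)"
    then have a: "a = 0" and j: "j < k" by auto
    have "(H * Y2) $$ (i, j) = 0"
      using H Y2 i j H_i by (simp add: scalar_prod_def)
    then have "(V * Y1 + H * Y2) $$ (i, j) = V $$ (i, 0) * Y1 $$ (0, j)"
      using V H Y1 Y2 i j by (simp add: scalar_prod_def)
    then have "V $$ (i, 0) * Y1 $$ (0, j) = 0" using sum i j by simp
    then show "Y1 $$ (a, j) = 0\<^sub>m 1 k $$ (a, j)" using a j \<open>V $$ (i, 0) \<noteq> 0\<close> by simp
  qed (use Y1 in auto)
  then have "H * Y2 = 0\<^sub>m n k" using sum V H Y1 Y2 by simp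
  then have "Y2 = 0\<^sub>m r k" using \<open>indep_cols H\<close> H Y2 unfolding indep_cols_def by auto
  then show "Y = 0\<^sub>m (dim_col (V @\<^sub>c H)) k"
    using \<open>Y1 = 0\<^sub>m 1 k\<close> Y_split VH by (auto intro!: eq_matI simp: append_rows_def)
qed

text \<open>The column \<open>M * c\<close> together with a column basis of \<open>M * (1 - c * a)\<close> is a column
  basis of \<open>M\<close>.\<close>

lemma has_col_basis_if_reduced:
  fixes M :: "'a :: idom mat"
  assumes M: "M \<in> carrier_mat n m" and c: "c \<in> carrier_mat m 1" and a: "a \<in> carrier_mat 1 m"
    and i: "i < n" and "(M * c) $$ (i, 0) \<noteq> 0"
    and reduced: "\<And>j. j < m \<Longrightarrow> (M * (1\<^sub>m m - c * a)) $$ (i, j) = 0"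
    and basis: "has_col_basis (M * (1\<^sub>m m - c * a))"
  shows "has_col_basis M"
proof -
  define M' where "M' = M * (1\<^sub>m m - c * a)"
  have P: "1\<^sub>m m - c * a \<in> carrier_mat m m" using c a by auto
  have M': "M' \<in> carrier_mat n m" unfolding M'_def using M P by auto
  then have "dim_row M' = n" "dim_col M' = m" by auto
  then obtain r H Z1 Z2 where H: "H \<in> carrier_mat n r" and Z1: "Z1 \<in> carrier_mat r m"
    and Z2: "Z2 \<in> carrier_mat m r" and M'_H: "M' = H * Z1" and H_M': "H = M' * Z2" and "indep_cols H"
    using basis unfolding has_col_basis_def M'_def[symmetric] by metis
  have Mc: "M * c \<in> carrier_mat n 1" using M c by auto
  have "(M * c @\<^sub>c H) * (a @\<^sub>r Z1) = M * c * a + M'"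
    using append_cols_mult_append_rows[OF Mc H a Z1] M'_H by simp
  also have "\<dots> = M * c * a + (M - M * c * a)"
    unfolding M'_def using mult_minus_distrib_mat[OF M one_carrier_mat mult_carrier_mat[OF c a]] M c a
    by simp
  also have "\<dots> = M" using M c a by (intro eq_matI) auto
  finally have "(M * c @\<^sub>c H) * (a @\<^sub>r Z1) = M" .
  moreover have "M * (c @\<^sub>c (1\<^sub>m m - c * a) * Z2) = M * c @\<^sub>c H"
    using mult_append_cols[OF M c mult_carrier_mat[OF P Z2]] assoc_mult_mat[OF M P Z2]
    unfolding H_M' M'_def by simp
  moreover have "indep_cols (M * c @\<^sub>c H)"
  proof (rule indep_cols_append_col[OF Mc H \<open>indep_cols H\<close> i \<open>(M * c) $$ (i, 0) \<noteq> 0\<close>])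
    show "H $$ (i, l) = 0" if "l < r" for l
      unfolding H_M' using M' Z2 i that reduced[folded M'_def] by (simp add: scalar_prod_def)
  qed
  moreover note carrier_append_cols[OF Mc H] carrier_append_rows[OF a Z1]
    carrier_append_cols[OF c mult_carrier_mat[OF P Z2]]
  ultimately show ?thesis
    unfolding has_col_basis_def using M
    by (intro exI[of _ "1 + r"] exI[of _ "M * c @\<^sub>c H"] exI[of _ "a @\<^sub>r Z1"]
        exI[of _ "c @\<^sub>c (1\<^sub>m m - c * a) * Z2"]) auto
qed

text \<open>Clearing row \<open>i\<close>: if \<open>d = \<Sum>l. c l * M $$ (i, l)\<close> divides the whole row, say
  \<open>M $$ (i, j) = d * a j\<close>, then \<open>M * (1 - c * a)\<close> is zero in row \<open>i\<close> (and in all rows that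
  were already zero), while \<open>(M * c) $$ (i, 0) = d\<close>.\<close>

lemma has_col_basis_step:
  fixes M :: "'a :: bezout_domain mat"
  assumes M: "M \<in> carrier_mat n m" and i: "i < n"
    and zero: "\<And>k j. k < i \<Longrightarrow> j < m \<Longrightarrow> M $$ (k, j) = 0"
    and IH: "\<And>M' :: 'a mat. M' \<in> carrier_mat n m \<Longrightarrow> (\<And>k j. k \<le> i \<Longrightarrow> j < m \<Longrightarrow> M' $$ (k, j) = 0)
      \<Longrightarrow> has_col_basis M'"
  shows "has_col_basis M"
proof -
  obtain c where c: "\<And>j. j < m \<Longrightarrow> (\<Sum>l<m. c l * M $$ (i, l)) dvd M $$ (i, j)"
    using bezout_domain_gcd_sum[of m "\<lambda>l. M $$ (i, l)"] by blast
  define d where "d = (\<Sum>l<m. c l * M $$ (i, l))"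
  show ?thesis
  proof (cases "d = 0")
    case True
    then have "M $$ (i, j) = 0" if "j < m" for j
      using c[OF that] unfolding d_def[symmetric] by simp
    then show ?thesis
      using zero by (intro IH[OF M]) (auto simp: le_less)
  next
    case False
    obtain a where a: "\<And>j. j < m \<Longrightarrow> M $$ (i, j) = d * a j"
      using c unfolding d_def[symmetric] dvd_def by metis
    define cc where "cc = mat m 1 (\<lambda>(l, _). c l)"
    define aa where "aa = mat 1 m (\<lambda>(_, j). a j)"
    have cc: "cc \<in> carrier_mat m 1" and aa: "aa \<in> carrier_mat 1 m"
      unfolding cc_def aa_def by auto
    have Mcc: "(M * cc) $$ (k, 0) = (\<Sum>l<m. c l * M $$ (k, l))" if "k < n" for k
      using M that unfolding cc_def
      by (auto simp: scalar_prod_def lessThan_atLeast0 mult.commute intro: sum.cong)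
    have "M * (1\<^sub>m m - cc * aa) = M - M * cc * aa"
      using mult_minus_distrib_mat[OF M one_carrier_mat mult_carrier_mat[OF cc aa]] M cc aa by simp
    then have reduced: "(M * (1\<^sub>m m - cc * aa)) $$ (k, j) = M $$ (k, j) - (M * cc) $$ (k, 0) * a j"
      if "k < n" "j < m" for k j
      using that M cc aa by (simp add: scalar_prod_def aa_def)
    have Mcc_i: "(M * cc) $$ (i, 0) = d" using Mcc[OF i] unfolding d_def .
    have cleared: "(M * (1\<^sub>m m - cc * aa)) $$ (k, j) = 0" if "k \<le> i" "j < m" for k j
    proof (cases "k = i")
      case True
      then show ?thesis using reduced i that a Mcc_i by simp
    next
      case False
      then show ?thesis using reduced Mcc i that zero by simp
    qed
    moreover have "M * (1\<^sub>m m - cc * aa) \<in> carrier_mat n m" using M cc aa by auto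
    then have "has_col_basis (M * (1\<^sub>m m - cc * aa))" using cleared by (rule IH)
    then show ?thesis
      using Mcc_i False cleared[OF order_refl] by (intro has_col_basis_if_reduced[OF M cc aa i]) auto
  qed
qed

lemma has_col_basis:
  fixes M :: "'a :: bezout_domain mat"
  assumes "M \<in> carrier_mat n m"
  shows "has_col_basis M"
proof -
  have "\<forall>M \<in> carrier_mat n m. (\<forall>k<i. \<forall>j<m. M $$ (k, j) = (0 :: 'a)) \<longrightarrow> has_col_basis M"
    if "i \<le> n" for i
    using that
  proof (induction i rule: inc_induct)
    case base
    show ?case
    proof (intro ballI impI)
      fix M :: "'a mat" assume "M \<in> carrier_mat n m" "\<forall>k<n. \<forall>j<m. M $$ (k, j) = 0"
      then have "M = 0\<^sub>m n m" by (intro eq_matI) auto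
      then show "has_col_basis M" using has_col_basis_zero by simp
    qed
  next
    case (step i)
    show ?case
    proof (intro ballI impI)
      fix M :: "'a mat" assume "M \<in> carrier_mat n m" "\<forall>k<i. \<forall>j<m. M $$ (k, j) = 0"
      then show "has_col_basis M"
        using step.IH \<open>i < n\<close> by (intro has_col_basis_step[of M n m i]) (auto simp: less_Suc_eq_le)
    qed
  qed
  from this[of 0] show ?thesis using assms by simp
qed

lemma idempotent_mat_factor:
  fixes K :: "'a :: bezout_domain mat"
  assumes K: "K \<in> carrier_mat n n" and KK: "K * K = K"
  shows "\<exists>s N Z. N \<in> carrier_mat n s \<and> Z \<in> carrier_mat s n \<and> K = N * Z \<and> Z * N = 1\<^sub>m s"
proof -
  have "dim_row K = n" "dim_col K = n" using K by auto
  then obtain s N Z Z' where N: "N \<in> carrier_mat n s" and Z: "Z \<in> carrier_mat s n"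
    and Z': "Z' \<in> carrier_mat n s" and K_N: "K = N * Z" and N_K: "N = K * Z'" and "indep_cols N"
    using has_col_basis[OF K] unfolding has_col_basis_def by metis
  have "N * (Z * N) = K * N" using N Z by (simp add: K_N)
  also have "\<dots> = K * K * Z'" using K Z' by (simp add: N_K)
  also have "\<dots> = N" by (simp only: KK N_K[symmetric])
  also have "\<dots> = N * 1\<^sub>m s" using N by simp
  finally have "Z * N = 1\<^sub>m s"
    using indep_cols_cancel[OF N \<open>indep_cols N\<close>, of "Z * N" s "1\<^sub>m s"] N Z by auto
  then show ?thesis using N Z K_N by blast
qed

lemma left_invertible_mat_complement:
  fixes H :: "'a :: bezout_domain mat"
  assumes H: "H \<in> carrier_mat n r" and L: "L \<in> carrier_mat r n" and LH: "L * H = 1\<^sub>m r"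
  shows "\<exists>s N Z. N \<in> carrier_mat n s \<and> Z \<in> carrier_mat s n \<and> H * L + N * Z = 1\<^sub>m n
    \<and> L * N = 0\<^sub>m r s \<and> Z * H = 0\<^sub>m s r \<and> Z * N = 1\<^sub>m s"
proof -
  define K where "K = 1\<^sub>m n - H * L"
  have HL: "H * L \<in> carrier_mat n n" using H L by auto
  have K: "K \<in> carrier_mat n n" unfolding K_def using minus_carrier_mat[OF HL] .
  have "A + (1\<^sub>m n - A) = 1\<^sub>m n" if "A \<in> carrier_mat n n" for A :: "'a mat"
    using that by (intro eq_matI) auto
  then have HLK: "H * L + K = 1\<^sub>m n" unfolding K_def using HL .
  have "L * K = L - L * H * L"
    unfolding K_def using mult_minus_distrib_mat[OF L one_carrier_mat HL] L H by simp
  then have LK: "L * K = 0\<^sub>m r n" using LH L by simp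
  have "K * H = H - H * (L * H)"
    unfolding K_def using minus_mult_distrib_mat[OF one_carrier_mat HL H] L H by simp
  then have KH: "K * H = 0\<^sub>m n r" using LH H by simp
  have "K * K = K - H * (L * K)"
    unfolding K_def using minus_mult_distrib_mat[OF one_carrier_mat HL K] H L K
    by (simp flip: K_def)
  also have "\<dots> = K" using H K by (intro eq_matI) (auto simp: LK)
  finally have "K * K = K" .
  then obtain s N Z where N: "N \<in> carrier_mat n s" and Z: "Z \<in> carrier_mat s n"
    and K_NZ: "K = N * Z" and ZN: "Z * N = 1\<^sub>m s"
    using idempotent_mat_factor[OF K] by blast
  note dims = carrier_matD[OF H] carrier_matD[OF L] carrier_matD[OF N] carrier_matD[OF Z]
  have "L * N = L * K * N" using ZN by (simp add: K_NZ mult_assoc_dim dims)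
  then have LN: "L * N = 0\<^sub>m r s" using LK N by simp
  have "Z * H = Z * N * (Z * H)" using ZN by (simp add: dims)
  also have "\<dots> = Z * K * H" by (simp add: K_NZ mult_assoc_dim dims)
  also have "\<dots> = 0\<^sub>m s r" using Z by (simp add: assoc_mult_mat[OF Z K H] KH)
  finally show ?thesis
    using N Z ZN HLK LN unfolding K_NZ by (intro exI[of _ s] exI[of _ N] exI[of _ Z]) simp
qed

text \<open>The hypotheses say that the column space of \<open>H\<close> is an \<open>M\<close>-invariant direct summand
  on which \<open>M\<close> acts by \<open>T\<close>, and that \<open>M\<close> vanishes on the complementary summand \<open>ker L\<close>.\<close>

lemma similar_mat_four_block_0_if_invariant:
  fixes M :: "'a :: bezout_domain mat"
  assumes M: "M \<in> carrier_mat n n" and H: "H \<in> carrier_mat n r" and L: "L \<in> carrier_mat r n"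
    and T: "T \<in> carrier_mat r r" and LH: "L * H = 1\<^sub>m r" and MH: "M * H = H * T"
    and MHL: "M * H * L = M"
  shows "\<exists>s. n = r + s \<and> similar_mat M (four_block_mat T (0\<^sub>m r s) (0\<^sub>m s r) (0\<^sub>m s s))"
proof -
  obtain s N Z where N: "N \<in> carrier_mat n s" and Z: "Z \<in> carrier_mat s n"
    and HLNZ: "H * L + N * Z = 1\<^sub>m n" and LN: "L * N = 0\<^sub>m r s" and ZH: "Z * H = 0\<^sub>m s r"
    and ZN: "Z * N = 1\<^sub>m s"
    using left_invertible_mat_complement[OF H L LH] by blast
  define S where "S = H @\<^sub>c N"
  define W where "W = L @\<^sub>r Z"
  have S: "S \<in> carrier_mat n (r + s)" and W: "W \<in> carrier_mat (r + s) n"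
    unfolding S_def W_def using H N L Z by auto
  have SW: "S * W = 1\<^sub>m n"
    unfolding S_def W_def append_cols_mult_append_rows[OF H N L Z] by (fact HLNZ)
  have WS: "W * S = 1\<^sub>m (r + s)"
    unfolding S_def W_def append_rows_mult_append_cols[OF L Z H N] using LH LN ZH ZN by simp
  have n: "n = r + s"
    using left_invertible_mat_dim_le[OF S W WS] left_invertible_mat_dim_le[OF W S SW] by simp
  have "M * N = M * H * L * N" by (simp only: MHL)
  also have "\<dots> = M * H * (L * N)" by (rule assoc_mult_mat[OF mult_carrier_mat[OF M H] L N])
  finally have MN: "M * N = 0\<^sub>m n s" using LN M H by simp
  have "W * (M * S) = W * (H * T @\<^sub>c 0\<^sub>m n s)"
    unfolding S_def using mult_append_cols[OF M H N] MH MN by simp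
  also have "\<dots> = four_block_mat (L * (H * T)) (L * 0\<^sub>m n s) (Z * (H * T)) (Z * 0\<^sub>m n s)"
    unfolding W_def by (rule append_rows_mult_append_cols[OF L Z mult_carrier_mat[OF H T] zero_carrier_mat])
  also have "\<dots> = four_block_mat T (0\<^sub>m r s) (0\<^sub>m s r) (0\<^sub>m s s)"
    unfolding assoc_mult_mat[OF L H T, symmetric] assoc_mult_mat[OF Z H T, symmetric] LH ZH
    using L Z T by simp
  finally have WMS: "W * (M * S) = four_block_mat T (0\<^sub>m r s) (0\<^sub>m s r) (0\<^sub>m s s)" .
  have "M = S * W * M * (S * W)" using SW M by simp
  also have "\<dots> = S * (W * (M * S)) * W"
    by (simp add: mult_assoc_dim carrier_matD[OF S] carrier_matD[OF W] carrier_matD[OF M])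
  finally have "M = S * four_block_mat T (0\<^sub>m r s) (0\<^sub>m s r) (0\<^sub>m s s) * W"
    unfolding WMS .
  then have "similar_mat M (four_block_mat T (0\<^sub>m r s) (0\<^sub>m s r) (0\<^sub>m s s))"
    using S W SW WS M T unfolding n by (intro similar_matI[of _ _ S W "r + s"]) auto
  then show ?thesis using n by blast
qed

lemma similar_mat_mult_four_block_0:
  fixes P :: "'a :: bezout_domain mat"
  assumes P: "P \<in> carrier_mat n r" and Q: "Q \<in> carrier_mat r n" and W: "W \<in> carrier_mat r r"
    and WQP: "W * (Q * P) = 1\<^sub>m r" and QPW: "Q * P * W = 1\<^sub>m r"
  shows "\<exists>s. n = r + s \<and> similar_mat (P * Q) (four_block_mat (Q * P) (0\<^sub>m r s) (0\<^sub>m s r) (0\<^sub>m s s))"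
proof (rule similar_mat_four_block_0_if_invariant[where H = P and L = "W * Q"])
  note dims = carrier_matD[OF P] carrier_matD[OF Q] carrier_matD[OF W]
  show "P * Q \<in> carrier_mat n n" "W * Q \<in> carrier_mat r n" "Q * P \<in> carrier_mat r r"
    using P Q W by auto
  show "W * Q * P = 1\<^sub>m r" using WQP by (simp add: mult_assoc_dim dims)
  show "P * Q * P = P * (Q * P)" by (simp add: mult_assoc_dim dims)
  have "P * Q * P * (W * Q) = P * (Q * P * W) * Q" by (simp add: mult_assoc_dim dims)
  then show "P * Q * P * (W * Q) = P * Q" using QPW by (simp add: dims)
qed (fact P)

lemma similar_mat_mult_if_swapped_eq:
  fixes P1 :: "'a :: bezout_domain mat"
  assumes P1: "P1 \<in> carrier_mat n r" and Q1: "Q1 \<in> carrier_mat r n"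
    and P2: "P2 \<in> carrier_mat n r" and Q2: "Q2 \<in> carrier_mat r n" and W: "W \<in> carrier_mat r r"
    and swap: "Q1 * P1 = Q2 * P2" and "W * (Q1 * P1) = 1\<^sub>m r" and "Q1 * P1 * W = 1\<^sub>m r"
  shows "similar_mat (P1 * Q1) (P2 * Q2)"
proof -
  obtain s1 where "n = r + s1"
    and sim1: "similar_mat (P1 * Q1) (four_block_mat (Q1 * P1) (0\<^sub>m r s1) (0\<^sub>m s1 r) (0\<^sub>m s1 s1))"
    using similar_mat_mult_four_block_0[OF P1 Q1 W] assms by blast
  moreover obtain s2 where "n = r + s2"
    and sim2: "similar_mat (P2 * Q2) (four_block_mat (Q1 * P1) (0\<^sub>m r s2) (0\<^sub>m s2 r) (0\<^sub>m s2 s2))"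
    using similar_mat_mult_four_block_0[OF P2 Q2 W] assms unfolding swap by blast
  ultimately show ?thesis using similar_mat_trans[OF sim1 similar_mat_sym] by simp
qed

lemma col_basis_swap_right_inverse:
  fixes A :: "'a :: comm_ring_1 mat"
  assumes A: "A \<in> carrier_mat n m" and B: "B \<in> carrier_mat m n"
    and X: "X \<in> carrier_mat n m" and Y: "Y \<in> carrier_mat m n"
    and H: "H \<in> carrier_mat n r" and F: "F \<in> carrier_mat r m" and E: "E \<in> carrier_mat m r"
    and AHF: "A = H * F" and HAE: "H = A * E" and "indep_cols H"
    and AX: "A = A * B * X" and BY: "B = B * A * Y"
  shows "F * B * H * (F * Y * X * E) = 1\<^sub>m r"
proof -
  note dims = carrier_matD[OF A] carrier_matD[OF B] carrier_matD[OF X] carrier_matD[OF Y]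
    carrier_matD[OF H] carrier_matD[OF F] carrier_matD[OF E]
  have "H * (F * B * H * (F * Y * X * E)) = A * (B * A * Y) * X * E"
    unfolding AHF by (simp add: mult_assoc_dim dims)
  also have "\<dots> = H * 1\<^sub>m r"
    unfolding BY[symmetric] AX[symmetric] HAE[symmetric] using H by simp
  finally have "H * (F * B * H * (F * Y * X * E)) = H * 1\<^sub>m r" .
  moreover have "F * B * H * (F * Y * X * E) \<in> carrier_mat r r" using F B H X Y E by auto
  ultimately show ?thesis using indep_cols_cancel[OF H \<open>indep_cols H\<close> _ one_carrier_mat] by blast
qed

lemma col_basis_swap_eq:
  fixes A :: "'a :: comm_ring_1 mat"
  assumes A: "A \<in> carrier_mat n m" and B: "B \<in> carrier_mat m n" and C: "C \<in> carrier_mat m n"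
    and H: "H \<in> carrier_mat n r" and F: "F \<in> carrier_mat r m" and E: "E \<in> carrier_mat m r"
    and AHF: "A = H * F" and HAE: "H = A * E" and "indep_cols H"
    and ABA: "A * B * A = A * C * A"
  shows "F * (C * H) = F * B * H"
proof -
  note dims = carrier_matD[OF A] carrier_matD[OF B] carrier_matD[OF C]
    carrier_matD[OF H] carrier_matD[OF F] carrier_matD[OF E]
  have "H * (F * C * A) = H * (F * B * A)"
    using ABA unfolding AHF by (simp add: mult_assoc_dim dims)
  moreover have "F * C * A \<in> carrier_mat r m" "F * B * A \<in> carrier_mat r m" using F B C A by auto
  ultimately have FCA: "F * C * A = F * B * A" using indep_cols_cancel[OF H \<open>indep_cols H\<close>] by blast
  have "F * (C * H) = F * C * A * E" unfolding HAE by (simp add: mult_assoc_dim dims)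
  also have "\<dots> = F * B * H" unfolding FCA HAE by (simp add: mult_assoc_dim dims)
  finally show ?thesis .
qed

theorem corollary2p3:
  fixes A B C :: "'a :: bezout_domain mat" and n :: nat
  assumes "A \<in> carrier_mat n n" and "B \<in> carrier_mat n n" and "C \<in> carrier_mat n n"
    and "A * B * A = A * C * A"
    and "col_space A = col_space (A * B)"
    and "col_space B = col_space (B * A)"
  shows "similar_mat (A * B) (C * A)"
proof -
  note A = assms(1) and B = assms(2) and C = assms(3)
  obtain X where X: "X \<in> carrier_mat n n" and AX: "A = A * B * X"
    using col_space_subset_imp_factor[OF A mult_carrier_mat[OF A B]] assms(5) by auto
  obtain Y where Y: "Y \<in> carrier_mat n n" and BY: "B = B * A * Y"
    using col_space_subset_imp_factor[OF B mult_carrier_mat[OF B A]] assms(6) by auto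
  have "dim_row A = n" "dim_col A = n" using A by auto
  then obtain r H F E where H: "H \<in> carrier_mat n r" and F: "F \<in> carrier_mat r n"
    and E: "E \<in> carrier_mat n r" and AHF: "A = H * F" and HAE: "H = A * E" and "indep_cols H"
    using has_col_basis[OF A] unfolding has_col_basis_def by metis
  define W where "W = F * Y * X * E"
  have W: "W \<in> carrier_mat r r" unfolding W_def using F Y X E by auto
  have TW: "F * B * H * W = 1\<^sub>m r"
    unfolding W_def using col_basis_swap_right_inverse[OF A B X Y H F E AHF HAE] AX BY
      \<open>indep_cols H\<close> by blast
  then have "W * (F * B * H) = 1\<^sub>m r"
    using mat_mult_left_right_inverse_comm_ring[OF _ W] F B H by simp
  moreover have "F * (C * H) = F * B * H"
    using col_basis_swap_eq[OF A B C H F E AHF HAE \<open>indep_cols H\<close> assms(4)] .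
  ultimately have "similar_mat (H * (F * B)) (C * H * F)"
    using H F B C W TW by (intro similar_mat_mult_if_swapped_eq[of H n r "F * B" "C * H" F W]) simp_all
  then show ?thesis using H F B C by (simp add: AHF)
qed

end
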